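(* Let $w_{\mathrm{asym}}=(\mu+w_{\mathrm{pre}})/\|\mu+w_{\mathrm{pre}}\|_2$, so that the 1-nearest-neighbour classifier whose memory for class $0$ consists only of copies of $m_0^*=-\mu-w_{\mathrm{pre}}$ and for class $1$ only of copies of $m_1^*=\mu+w_{\mathrm{pre}}$ is the linear classifier $h_{\mathrm{asym}}(f)=\mathbf 1\{f^\top w_{\mathrm{asym}}>0\}$ (weight $w_{\mathrm{asym}}$, bias $0$). Then $\mu^\top w_{\mathrm{asym}}\ge\mu^\top w_{\mathrm{pre}}$, and the error rate satisfies $\epsilon_{\mathrm{asym}}:=\epsilon(h_{\mathrm{asym}})\le\epsilon_{\mathrm{pre}}$.
   Context: Fix $d\ge1$, $\mu\in\mathbb{R}^d$, $w_{\mathrm{pre}}\in\mathbb{R}^d$ with $\|w_{\mathrm{pre}}\|_2=1$, $b_{\mathrm{pre}}\in\mathbb{R}$. Data: label $y$ uniform on $\{0,1\}$; given $y$, embedding $f$ uniform on the closed unit ball centered at $(2y-1)\mu$. For a classifier $h$, $\epsilon(h)=\Pr(h(f)\ne y)$. The initial classifier is $\hat y(f)=\mathbf 1\{f^\top w_{\mathrm{pre}}+b_{\mathrm{pre}}>0\}$ with error rate $\epsilon_{\mathrm{pre}}$, assumed to satisfy $\epsilon_{\mathrm{pre}}<1/2$, equivalently $\mu^\top w_{\mathrm{pre}}>0$ and $-\mu^\top w_{\mathrm{pre}}-1<b_{\mathrm{pre}}<\mu^\top w_{\mathrm{pre}}+1$. *)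

theory Defs
  imports "HOL-Analysis.Analysis"
begin

definition lin_clf :: "'a::euclidean_space \<Rightarrow> real \<Rightarrow> 'a \<Rightarrow> bool" where
  "lin_clf w b f \<longleftrightarrow> f \<bullet> w + b > 0"

definition unif_ball :: "'a::euclidean_space \<Rightarrow> 'a measure" where
  "unif_ball c = uniform_measure lborel (cball c 1)"

text \<open>Error rate Pr(h(f) \<noteq> y), where y is uniform on {0,1} (True = label 1)
  and given y, f is uniform on the closed unit ball centred at (2y-1) mu.\<close>
definition err_rate :: "'a::euclidean_space \<Rightarrow> ('a \<Rightarrow> bool) \<Rightarrow> real" where
  "err_rate mu h =
     (1/2) * measure (unif_ball (- mu)) {f. h f}
   + (1/2) * measure (unif_ball mu) {f. \<not> h f}"

end

theory Submission
  imports Defs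
begin

(* For a unit vector w, the error of f \<mapsto> [f \<bullet> w + b > 0] is
   (C (mu \<bullet> w - b) + C (mu \<bullet> w + b)) / (2 vol B), where C t is the volume of the cap
   {x \<in> B. t < x \<bullet> w} of the unit ball B. C does not depend on the direction w, since Lebesgue
   measure is invariant under orthogonal maps; it is decreasing; and it is midpoint convex on
   [0, \<infinity>), because the reflection in the hyperplane x \<bullet> w = a (a \<ge> 0) maps the slab
   a < x \<bullet> w \<le> a + c of B into the slab a - c \<le> x \<bullet> w \<le> a of B. Cauchy-Schwarz gives
   mu \<bullet> w_asym \<ge> mu \<bullet> w_pre, hence
   eps_asym = C (mu \<bullet> w_asym) / vol B \<le> C (mu \<bullet> w_pre) / vol B \<le> eps_pre. *)

(* Indexing the basis of 'a by a finite wellordered type identifies 'a isometrically with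
   real ^ 'a basis_index, where the library knows that orthogonal maps preserve Lebesgue measure. *)
typedef (overloaded) ('a::euclidean_space) basis_index = "{..<DIM('a)}"
  by (rule exI[of _ 0]) (simp add: DIM_positive)

instance basis_index :: (euclidean_space) finite
proof
  show "finite (UNIV :: 'a basis_index set)"
    by (metis finite_imageI finite_lessThan type_definition.univ[OF type_definition_basis_index])
qed

instantiation basis_index :: (euclidean_space) wellorder
begin

definition less_eq_basis_index :: "'a basis_index \<Rightarrow> 'a basis_index \<Rightarrow> bool"
  where "i \<le> j \<longleftrightarrow> Rep_basis_index i \<le> Rep_basis_index j"

definition less_basis_index :: "'a basis_index \<Rightarrow> 'a basis_index \<Rightarrow> bool"
  where "i < j \<longleftrightarrow> Rep_basis_index i < Rep_basis_index j"

instance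
proof
  fix P :: "'a basis_index \<Rightarrow> bool" and a
  assume step: "\<And>x. (\<And>y. y < x \<Longrightarrow> P y) \<Longrightarrow> P x"
  have "\<forall>x. Rep_basis_index x = n \<longrightarrow> P x" for n
    by (induction n rule: less_induct) (metis step less_basis_index_def)
  then show "P a" by blast
qed (auto simp: less_eq_basis_index_def less_basis_index_def Rep_basis_index_inject)

end

definition basis_enum :: "'a::euclidean_space basis_index \<Rightarrow> 'a" where
  "basis_enum i = (SOME h. bij_betw h {..<DIM('a)} Basis) (Rep_basis_index i)"

lemma bij_betw_basis_enum:
  "bij_betw (basis_enum :: 'a::euclidean_space basis_index \<Rightarrow> 'a) UNIV Basis"
proof -
  let ?h = "SOME h. bij_betw h {..<DIM('a)} (Basis :: 'a set)"
  have "bij_betw ?h {..<DIM('a)} Basis"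
    by (metis atLeast0LessThan ex_bij_betw_nat_finite finite_Basis someI_ex)
  moreover have "bij_betw (Rep_basis_index :: 'a basis_index \<Rightarrow> nat) UNIV {..<DIM('a)}"
    by (metis bij_betw_def inj_on_def Rep_basis_index_inject type_definition.Rep_range
        type_definition_basis_index)
  ultimately show ?thesis
    unfolding basis_enum_def[abs_def] using bij_betw_trans by (fastforce simp: comp_def)
qed

lemma range_basis_enum: "range basis_enum = (Basis :: 'a::euclidean_space set)"
  using bij_betw_basis_enum by (auto simp: bij_betw_def)

lemma inner_basis_enum: "basis_enum i \<bullet> basis_enum j = (if i = j then 1 else 0)"
proof -
  have "basis_enum i \<in> Basis" "basis_enum j \<in> Basis"
    using range_basis_enum by blast+
  moreover have "basis_enum i = basis_enum j \<longleftrightarrow> i = j"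
    using bij_betw_basis_enum[where 'a='a] by (auto simp: bij_betw_def inj_on_def)
  ultimately show ?thesis by (simp add: inner_Basis)
qed

lemma sum_basis_enum:
  "(\<Sum>i\<in>UNIV. f (basis_enum i)) = (\<Sum>b\<in>(Basis :: 'a::euclidean_space set). f b)"
  using sum.reindex_bij_betw[OF bij_betw_basis_enum] by blast

lemma prod_basis_enum:
  "(\<Prod>i\<in>UNIV. f (basis_enum i)) = (\<Prod>b\<in>(Basis :: 'a::euclidean_space set). f b)"
  using prod.reindex_bij_betw[OF bij_betw_basis_enum] by blast

definition coords :: "'a::euclidean_space \<Rightarrow> real ^ 'a basis_index" where
  "coords x = (\<chi> i. x \<bullet> basis_enum i)"

definition of_coords :: "real ^ 'a basis_index \<Rightarrow> 'a::euclidean_space" where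
  "of_coords y = (\<Sum>i\<in>UNIV. y $ i *\<^sub>R basis_enum i)"

lemma inner_coords: "coords x \<bullet> coords y = x \<bullet> y"
  unfolding coords_def inner_vec_def
  using sum_basis_enum[of "\<lambda>b. (x \<bullet> b) * (y \<bullet> b)"] by (simp add: euclidean_inner[of x y])

lemma inner_of_coords_basis_enum: "of_coords y \<bullet> basis_enum i = y $ i"
  by (simp add: of_coords_def inner_sum_left inner_basis_enum if_distrib cong: if_cong)

lemma coords_of_coords [simp]: "coords (of_coords y) = y"
  by (simp add: coords_def inner_of_coords_basis_enum vec_eq_iff)

lemma of_coords_coords [simp]: "of_coords (coords x) = x"
  unfolding of_coords_def coords_def
  using sum_basis_enum[of "\<lambda>b. (x \<bullet> b) *\<^sub>R b"] by (simp add: euclidean_representation)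

lemma linear_coords: "linear coords"
  by (rule linearI) (simp_all add: coords_def vec_eq_iff inner_add_left)

lemma linear_of_coords: "linear of_coords"
  by (rule linearI) (simp_all add: of_coords_def scaleR_add_left sum.distrib scaleR_sum_right)

lemma borel_measurable_linear:
  fixes f :: "'a::euclidean_space \<Rightarrow> 'b::euclidean_space"
  shows "linear f \<Longrightarrow> f \<in> borel_measurable borel"
  by (intro borel_measurable_continuous_onI linear_continuous_on linear_conv_bounded_linear[THEN iffD1])

lemma lborel_distr_coords: "distr lborel borel (coords :: 'a::euclidean_space \<Rightarrow> _) = lborel"
proof (rule lborel_eqI[symmetric])
  fix l u :: "real ^ 'a basis_index"
  assume "\<And>b. b \<in> Basis \<Longrightarrow> l \<bullet> b \<le> u \<bullet> b"
  then have le: "l $ i \<le> u $ i" for i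
    by (force simp: Basis_vec_def cart_eq_inner_axis)
  have "x \<in> box a b \<longleftrightarrow>
      (\<forall>i. a \<bullet> basis_enum i < x \<bullet> basis_enum i \<and> x \<bullet> basis_enum i < b \<bullet> basis_enum i)"
    for a b x :: 'a
    by (simp add: mem_box flip: range_basis_enum)
  then have "coords -` box l u = box (of_coords l) (of_coords u)"
    by (auto simp: mem_box_cart coords_def inner_of_coords_basis_enum)
  then have "emeasure (distr lborel borel coords) (box l u)
      = emeasure lborel (box (of_coords l) (of_coords u) :: 'a set)"
    by (simp add: emeasure_distr borel_measurable_linear[OF linear_coords])
  also have "\<dots> = (\<Prod>b\<in>Basis. (of_coords u - of_coords l) \<bullet> b)"
    using le by (intro emeasure_lborel_box)
      (auto simp: inner_of_coords_basis_enum cart_eq_inner_axis Basis_vec_def simp flip: range_basis_enum)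
  also have "\<dots> = (\<Prod>b\<in>Basis. (u - l) \<bullet> b)"
    using prod_basis_enum[of "\<lambda>b. (of_coords u - of_coords l) \<bullet> b"]
    by (simp add: inner_diff_left inner_of_coords_basis_enum Basis_vec_def cart_eq_inner_axis
        axis_eq_axis prod.UNION_disjoint)
  finally show "emeasure (distr lborel borel coords) (box l u) = (\<Prod>b\<in>Basis. (u - l) \<bullet> b)" .
qed simp

lemma lborel_distr_orthogonal_transformation_cart:
  fixes g :: "real ^ 'n::{finite,wellorder} \<Rightarrow> real ^ 'n::_"
  assumes g: "orthogonal_transformation g"
  shows "distr lborel borel g = lborel"
proof (rule lborel_eqI[symmetric])
  fix l u :: "real ^ 'n::{finite,wellorder}"
  assume le: "\<And>b. b \<in> Basis \<Longrightarrow> l \<bullet> b \<le> u \<bullet> b"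
  have g_borel: "g \<in> borel_measurable borel"
    using g by (simp add: borel_measurable_linear orthogonal_transformation_linear)
  have vimage: "g -` box l u = inv g ` box l u"
    using g by (simp add: bij_vimage_eq_inv_image orthogonal_transformation_bij)
  have "g -` box l u \<in> sets borel"
    using g_borel by (simp add: measurable_sets_borel)
  have "g -` box l u \<in> lmeasurable"
    unfolding vimage
    by (intro measurable_orthogonal_image orthogonal_transformation_inv g) simp
  have "emeasure (distr lborel borel g) (box l u) = emeasure lebesgue (g -` box l u)"
    using g_borel \<open>g -` box l u \<in> sets borel\<close> by (simp add: emeasure_distr)
  also have "\<dots> = measure lebesgue (g -` box l u)"
    using \<open>g -` box l u \<in> lmeasurable\<close> by (rule emeasure_eq_measure2)
  also have "\<dots> = measure lebesgue (box l u)"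
    unfolding vimage using measure_orthogonal_image[OF orthogonal_transformation_inv[OF g]]
    by simp
  also have "\<dots> = (\<Prod>b\<in>Basis. (u - l) \<bullet> b)"
    using le by (simp add: measure_lborel_box)
  finally show "emeasure (distr lborel borel g) (box l u) = (\<Prod>b\<in>Basis. (u - l) \<bullet> b)"
    by simp
qed simp

lemma lborel_distr_orthogonal_transformation:
  fixes f :: "'a::euclidean_space \<Rightarrow> 'a"
  assumes f: "orthogonal_transformation f"
  shows "distr lborel borel f = lborel"
proof -
  define g where "g = coords \<circ> f \<circ> of_coords"
  have "orthogonal_transformation g"
    using f unfolding g_def orthogonal_transformation_def
    by (metis (no_types, lifting) linear_compose linear_coords linear_of_coords comp_apply
        inner_coords coords_of_coords)
  then have g_borel: "g \<in> borel_measurable borel" and "distr lborel borel g = lborel"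
    by (simp_all add: borel_measurable_linear orthogonal_transformation_linear
        lborel_distr_orthogonal_transformation_cart)
  have coords_borel: "coords \<in> borel_measurable borel"
    and of_coords_borel: "of_coords \<in> borel_measurable borel"
    by (simp_all add: borel_measurable_linear linear_coords linear_of_coords)
  have "g \<circ> coords \<in> borel_measurable borel"
    using coords_borel g_borel by (rule measurable_comp)
  have of_coords_comp_coords: "of_coords \<circ> coords = (\<lambda>x. x)"
    by (simp add: fun_eq_iff)
  have "f = of_coords \<circ> g \<circ> coords"
    by (simp add: g_def fun_eq_iff)
  then have "distr lborel borel f
      = distr (distr (distr lborel borel coords) borel g) borel of_coords"
    using \<open>g \<circ> coords \<in> borel_measurable borel\<close>
    by (simp add: distr_distr coords_borel g_borel of_coords_borel comp_assoc)
  also have "\<dots> = distr (distr lborel borel coords) borel of_coords"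
    by (simp add: lborel_distr_coords \<open>distr lborel borel g = lborel\<close>)
  also have "\<dots> = lborel"
    by (simp add: distr_distr coords_borel of_coords_borel of_coords_comp_coords distr_id2)
  finally show ?thesis .
qed

lemma orthogonal_transformation_exists_real_inner:
  fixes a b :: "'a::real_inner"
  assumes "norm a = norm b"
  obtains f where "orthogonal_transformation f" "f a = b"
proof (cases "a = b")
  case True
  then show ?thesis
    using that[of "\<lambda>x. x"] by simp
next
  case False
  define d where "d = a - b"
  define f where "f x = x - (2 * (x \<bullet> d) / (d \<bullet> d)) *\<^sub>R d" for x
  have "d \<bullet> d \<noteq> 0"
    using False by (simp add: d_def)
  have "a \<bullet> a = b \<bullet> b"
    using assms by (simp add: dot_square_norm)
  then have "d \<bullet> d = 2 * (a \<bullet> d)"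
    by (simp add: d_def inner_diff_left inner_diff_right inner_commute)
  then have "f a = b"
    using \<open>d \<bullet> d \<noteq> 0\<close> by (simp add: f_def d_def)
  moreover have "orthogonal_transformation f"
    unfolding orthogonal_transformation_def
  proof
    show "linear f"
      by (rule linearI) (simp_all add: f_def inner_add_left scaleR_add_left add_divide_distrib
          algebra_simps)
    show "\<forall>x y. f x \<bullet> f y = x \<bullet> y"
      using \<open>d \<bullet> d \<noteq> 0\<close>
      by (simp add: f_def inner_diff_left inner_diff_right inner_commute power2_eq_square
          field_simps)
  qed
  ultimately show ?thesis
    using that by blast
qed

definition cap_volume :: "'a::euclidean_space \<Rightarrow> real \<Rightarrow> real" where
  "cap_volume w t = measure lebesgue (cball 0 1 \<inter> {x. t < x \<bullet> w})"

lemma measure_cball_Int_halfspace_split: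
  fixes w :: "'a::euclidean_space"
  assumes "A \<in> sets lebesgue"
  shows "measure lebesgue (cball 0 1 \<inter> A)
    = measure lebesgue (cball 0 1 \<inter> A \<inter> {x. t < x \<bullet> w})
    + measure lebesgue (cball 0 1 \<inter> A \<inter> {x. x \<bullet> w \<le> t})"
proof -
  let ?S = "cball 0 1 \<inter> A \<inter> {x. t < x \<bullet> w}"
  let ?T = "cball 0 1 \<inter> A \<inter> {x. x \<bullet> w \<le> t}"
  have "?S \<in> lmeasurable" "?T \<in> lmeasurable"
    using assms by (simp_all add: fmeasurable_Int_fmeasurable)
  moreover have "?S \<union> ?T = cball 0 1 \<inter> A" "?S \<inter> ?T = {}"
    by auto
  ultimately show ?thesis
    using measure_Un3[of ?S lebesgue ?T] by simp
qed

lemma cap_volume_closed: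
  fixes w :: "'a::euclidean_space"
  assumes "w \<noteq> 0"
  shows "measure lebesgue (cball 0 1 \<inter> {x. t \<le> x \<bullet> w}) = cap_volume w t"
proof -
  have "cball 0 1 \<inter> {x. t \<le> x \<bullet> w}
      = (cball 0 1 \<inter> {x. t < x \<bullet> w}) \<union> (cball 0 1 \<inter> {x. w \<bullet> x = t})"
    by (auto simp: inner_commute)
  moreover have "cball 0 1 \<inter> {x. w \<bullet> x = t} \<in> null_sets lebesgue"
    using negligible_hyperplane[of w t] assms negligible_subset negligible_iff_null_sets
    by (metis inf_le2)
  ultimately show ?thesis
    unfolding cap_volume_def by (simp add: measure_Un_null_set)
qed

lemma cap_volume_antimono:
  assumes "s \<le> t"
  shows "cap_volume w t \<le> cap_volume w s"
  unfolding cap_volume_def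
  using assms by (intro measure_mono_fmeasurable) (auto simp: fmeasurable_Int_fmeasurable)

lemma cap_volume_norm_eq:
  fixes u v :: "'a::euclidean_space"
  assumes "norm u = norm v"
  shows "cap_volume u t = cap_volume v t"
proof -
  obtain f where f: "orthogonal_transformation f" "f v = u"
    using orthogonal_transformation_exists_real_inner assms by metis
  have "cball 0 1 \<inter> {x. t < x \<bullet> v} = f -` (cball 0 1 \<inter> {y. t < y \<bullet> u})"
    using f by (auto simp: orthogonal_transformation_def orthogonal_transformation_norm)
  moreover have "f \<in> borel_measurable borel"
    using f by (simp add: borel_measurable_linear orthogonal_transformation_linear)
  ultimately have "measure lborel (cball 0 1 \<inter> {x. t < x \<bullet> v})
      = measure (distr lborel borel f) (cball 0 1 \<inter> {y. t < y \<bullet> u})"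
    by (simp add: measure_distr)
  then show ?thesis
    unfolding cap_volume_def lborel_distr_orthogonal_transformation[OF f(1)] by simp
qed

lemma norm_reflect_across_hyperplane_le:
  fixes w x :: "'a::real_inner"
  assumes "norm w = 1" "0 \<le> a" "a \<le> x \<bullet> w"
  shows "norm ((2 * a) *\<^sub>R w - x) \<le> norm x"
proof -
  let ?u = "(2 * a) *\<^sub>R w"
  have "norm (?u - x) ^ 2 = norm ?u ^ 2 + norm x ^ 2 - 2 * (?u \<bullet> x)"
    using dot_norm_neg[of ?u x] by simp
  also have "\<dots> = norm x ^ 2 - 4 * a * (x \<bullet> w - a)"
    using assms(1,2) by (simp add: inner_commute[of w x] power2_eq_square algebra_simps)
  also have "\<dots> \<le> norm x ^ 2"
    using assms(2,3) by simp
  finally show ?thesis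
    by (rule power2_le_imp_le) simp
qed

lemma measure_upper_slab_le_lower_slab:
  fixes w :: "'a::euclidean_space"
  assumes "norm w = 1" "0 \<le> a"
  shows "measure lebesgue (cball 0 1 \<inter> {x. a < x \<bullet> w \<and> x \<bullet> w \<le> a + c})
    \<le> measure lebesgue (cball 0 1 \<inter> {x. a - c \<le> x \<bullet> w \<and> x \<bullet> w \<le> a})"
proof -
  let ?U = "cball (0::'a) 1 \<inter> {x. a < x \<bullet> w \<and> x \<bullet> w \<le> a + c}"
  let ?L = "cball (0::'a) 1 \<inter> {x. a - c \<le> x \<bullet> w \<and> x \<bullet> w \<le> a}"
  define R where "R x = (-1) *\<^sub>R x + (2 * a) *\<^sub>R w" for x :: 'a
  have "w \<bullet> w = 1"
    using assms(1) by (simp add: dot_square_norm)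
  have "R x \<in> ?L" if "x \<in> ?U" for x
  proof -
    have "norm (R x) \<le> norm x"
      using norm_reflect_across_hyperplane_le[OF assms, of x] that by (simp add: R_def)
    moreover have "R x \<bullet> w = 2 * a - x \<bullet> w"
      using \<open>w \<bullet> w = 1\<close> by (simp add: R_def inner_diff_left)
    ultimately show ?thesis
      using that by auto
  qed
  then have "R ` ?U \<subseteq> ?L"
    by blast
  have "emeasure lebesgue ?U = emeasure lebesgue (R ` ?U)"
    using emeasure_lebesgue_affine[of "-1" "(2 * a) *\<^sub>R w" ?U] by (simp add: R_def[abs_def])
  also have "\<dots> \<le> emeasure lebesgue ?L"
    using \<open>R ` ?U \<subseteq> ?L\<close> by (rule emeasure_mono) simp
  finally have "emeasure lebesgue ?U \<le> emeasure lebesgue ?L" .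
  moreover have "?L \<in> lmeasurable"
    by (simp add: fmeasurable_Int_fmeasurable)
  ultimately show ?thesis
    unfolding measure_def by (intro enn2real_mono) (simp_all add: fmeasurable_def)
qed

lemma cap_volume_midpoint_convex:
  fixes w :: "'a::euclidean_space"
  assumes w: "norm w = 1" and "0 \<le> a"
  shows "2 * cap_volume w a \<le> cap_volume w (a - c) + cap_volume w (a + c)"
proof -
  have "2 * cap_volume w a \<le> cap_volume w (a - c) + cap_volume w (a + c)" if "0 \<le> c" for c
  proof -
    let ?U = "cball 0 1 \<inter> {x. a < x \<bullet> w \<and> x \<bullet> w \<le> a + c}"
    let ?L = "cball 0 1 \<inter> {x. a - c \<le> x \<bullet> w \<and> x \<bullet> w \<le> a}"
    have "cap_volume w a = cap_volume w (a + c) + measure lebesgue ?U"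
    proof -
      have "cball 0 1 \<inter> {x. a < x \<bullet> w} \<inter> {x. a + c < x \<bullet> w}
          = cball 0 1 \<inter> {x. a + c < x \<bullet> w}"
        "cball 0 1 \<inter> {x. a < x \<bullet> w} \<inter> {x. x \<bullet> w \<le> a + c} = ?U"
        using that by auto
      then show ?thesis
        using measure_cball_Int_halfspace_split[of "{x. a < x \<bullet> w}" "a + c" w]
        by (simp add: cap_volume_def)
    qed
    moreover have "cap_volume w (a - c) = cap_volume w a + measure lebesgue ?L"
    proof -
      have "cball 0 1 \<inter> {x. a - c \<le> x \<bullet> w} \<inter> {x. a < x \<bullet> w}
          = cball 0 1 \<inter> {x. a < x \<bullet> w}"
        "cball 0 1 \<inter> {x. a - c \<le> x \<bullet> w} \<inter> {x. x \<bullet> w \<le> a} = ?L"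
        using that by auto
      moreover have "w \<noteq> 0"
        using w by auto
      ultimately show ?thesis
        using measure_cball_Int_halfspace_split[of "{x. a - c \<le> x \<bullet> w}" a w]
          cap_volume_closed[of w "a - c"]
        by (simp add: cap_volume_def)
    qed
    moreover have "measure lebesgue ?U \<le> measure lebesgue ?L"
      using measure_upper_slab_le_lower_slab[OF assms] .
    ultimately show ?thesis
      by simp
  qed
  from this[of c] this[of "- c"] show ?thesis
    by (cases "0 \<le> c") (simp_all add: add.commute)
qed

lemma measure_unif_ball:
  fixes c :: "'a::euclidean_space"
  assumes "X \<in> sets borel"
  shows "measure (unif_ball c) X
    = measure lebesgue (cball c 1 \<inter> X) / measure lebesgue (cball (0::'a) 1)"
proof -
  have vol: "measure lebesgue (cball c 1) = measure lebesgue (cball (0::'a) 1)"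
    by (metis add.right_neutral cball_translation measure_translation)
  have "emeasure lborel (cball c 1) = measure lebesgue (cball c 1)"
    using emeasure_eq_measure2[OF lmeasurable_cball[of c 1]] by simp
  then have "emeasure lborel (cball c 1) \<noteq> 0" "emeasure lborel (cball c 1) \<noteq> \<infinity>"
    using vol content_cball_pos[of 1 "0::'a"] by simp_all
  then show ?thesis
    using assms vol by (simp add: unif_ball_def)
qed

lemma err_rate_lin_clf:
  fixes mu w :: "'a::euclidean_space"
  assumes "w \<noteq> 0"
  shows "err_rate mu (lin_clf w b)
    = (cap_volume w (mu \<bullet> w - b) + cap_volume w (mu \<bullet> w + b))
      / (2 * measure lebesgue (cball (0::'a) 1))"
proof -
  have "norm (- x - mu) = norm (- mu - x)" for x
    by (metis add.commute diff_conv_add_uminus)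
  then have "cball (- mu) 1 \<inter> {f. lin_clf w b f}
      = (\<lambda>x. x - mu) ` (cball 0 1 \<inter> {x. mu \<bullet> w - b < x \<bullet> w})"
    by (auto simp: lin_clf_def dist_norm inner_diff_left algebra_simps
        intro!: image_eqI[where x = "f + mu" for f])
  then have pos: "measure lebesgue (cball (- mu) 1 \<inter> {f. lin_clf w b f})
      = cap_volume w (mu \<bullet> w - b)"
    by (simp add: measure_translation_subtract cap_volume_def)
  have "cball mu 1 \<inter> {f. \<not> lin_clf w b f}
      = (\<lambda>x. (- 1) *\<^sub>R x + mu) ` (cball 0 1 \<inter> {x. mu \<bullet> w + b \<le> x \<bullet> w})"
    by (auto simp: lin_clf_def dist_norm inner_diff_left algebra_simps norm_minus_commute
        intro!: image_eqI[where x = "mu - f" for f])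
  then have neg: "measure lebesgue (cball mu 1 \<inter> {f. \<not> lin_clf w b f})
      = cap_volume w (mu \<bullet> w + b)"
    using measure_lebesgue_affine[of "- 1" mu] cap_volume_closed[OF assms] by simp
  have "{f. lin_clf w b f} \<in> sets borel" "{f. \<not> lin_clf w b f} \<in> sets borel"
    unfolding lin_clf_def by measurable
  then show ?thesis
    by (simp add: err_rate_def measure_unif_ball pos neg field_simps)
qed

lemma inner_le_inner_normalized_sum:
  fixes mu w :: "'a::real_inner"
  assumes "norm w = 1"
  shows "mu \<bullet> w \<le> mu \<bullet> ((1 / norm (mu + w)) *\<^sub>R (mu + w))"
proof (cases "mu + w = 0")
  case True
  then have "mu = - w"
    by (simp add: add_eq_0_iff)
  then show ?thesis
    using assms by (simp add: dot_square_norm)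
next
  case False
  define n where "n = norm (mu + w)"
  define s where "s = mu \<bullet> w"
  have "n > 0"
    using False by (simp add: n_def)
  have "w \<bullet> w = 1"
    using assms by (simp add: dot_square_norm)
  have "s + 1 \<le> n"
    using norm_cauchy_schwarz[of w "mu + w"] assms \<open>w \<bullet> w = 1\<close>
    by (simp add: n_def s_def inner_add_right inner_commute)
  have "mu \<bullet> (mu + w) = n ^ 2 - (s + 1)"
    using \<open>w \<bullet> w = 1\<close>
    by (simp add: n_def s_def power2_norm_eq_inner inner_add_left inner_add_right inner_commute)
  also have "n ^ 2 - (s + 1) = s * n + (n - (s + 1)) * (n + 1)"
    by (simp add: power2_eq_square algebra_simps)
  finally have "s * n \<le> mu \<bullet> (mu + w)"
    using \<open>s + 1 \<le> n\<close> \<open>n > 0\<close> by simp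
  moreover have "mu \<bullet> ((1 / n) *\<^sub>R (mu + w)) = mu \<bullet> (mu + w) / n"
    by (simp only: inner_scaleR_right) simp
  ultimately show ?thesis
    using \<open>n > 0\<close> by (simp add: n_def s_def pos_le_divide_eq)
qed

theorem lemma6:
  fixes mu w_pre :: "'a::euclidean_space" and b_pre :: real
  assumes "norm w_pre = 1"
    and "mu \<bullet> w_pre > 0"
    and "- (mu \<bullet> w_pre) - 1 < b_pre" and "b_pre < mu \<bullet> w_pre + 1"
  shows "let w_asym = (1 / norm (mu + w_pre)) *\<^sub>R (mu + w_pre) in
           mu \<bullet> w_asym \<ge> mu \<bullet> w_pre
         \<and> err_rate mu (lin_clf w_asym 0) \<le> err_rate mu (lin_clf w_pre b_pre)"
proof -
  define w_asym where "w_asym = (1 / norm (mu + w_pre)) *\<^sub>R (mu + w_pre)"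
  define V where "V = measure lebesgue (cball (0::'a) 1)"
  have "mu + w_pre \<noteq> 0"
    using assms(1,2) by (auto simp: add_eq_0_iff dot_square_norm)
  then have "norm w_asym = 1"
    by (simp add: w_asym_def)
  have "w_asym \<noteq> 0" "w_pre \<noteq> 0"
    using \<open>norm w_asym = 1\<close> assms(1) by auto
  have inner_le: "mu \<bullet> w_pre \<le> mu \<bullet> w_asym"
    unfolding w_asym_def using assms(1) by (rule inner_le_inner_normalized_sum)
  have "V > 0"
    unfolding V_def using content_cball_pos[of 1 "0::'a"] by simp
  have "err_rate mu (lin_clf w_asym 0) = cap_volume w_pre (mu \<bullet> w_asym) / V"
    using err_rate_lin_clf[OF \<open>w_asym \<noteq> 0\<close>, of mu 0] \<open>norm w_asym = 1\<close> assms(1)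
    by (simp add: V_def cap_volume_norm_eq[of w_asym w_pre])
  also have "\<dots> \<le> cap_volume w_pre (mu \<bullet> w_pre) / V"
    using cap_volume_antimono[OF inner_le, of w_pre] \<open>V > 0\<close> by (simp add: divide_right_mono)
  also have "\<dots> \<le>
      (cap_volume w_pre (mu \<bullet> w_pre - b_pre) + cap_volume w_pre (mu \<bullet> w_pre + b_pre)) / (2 * V)"
    using cap_volume_midpoint_convex[OF assms(1), of "mu \<bullet> w_pre" b_pre] assms(2) \<open>V > 0\<close>
    by (simp add: field_simps)
  also have "\<dots> = err_rate mu (lin_clf w_pre b_pre)"
    using err_rate_lin_clf[OF \<open>w_pre \<noteq> 0\<close>] by (simp add: V_def)
  finally show ?thesis
    using inner_le by (simp add: w_asym_def Let_def)
qed

end
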